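(* Let $(M,g,S)$, $p$, $u$ and the coordinates $(x',y',z',t')$ be as in the context. Then $u$, $Su$, $S^2u$, $S^3u$ are isotropic vectors with respect to $\tilde g$, and their endpoints lie on the surface in $T_pM$ given by $$x'^2+y'^2=\tfrac12,\qquad z'^2+t'^2=\tfrac12.$$
   Context: $M$ is a 4-dimensional differentiable manifold with a positive definite metric $g$ and a tensor field $S$ of type $(1,1)$ whose components in some local coordinate system form the matrix with rows $(0,1,0,0)$, $(0,0,1,0)$, $(0,0,0,1)$, $(-1,0,0,0)$; hence $S^4=-\mathrm{id}$, and $g(Su,Sv)=g(u,v)$ for all vector fields $u,v$. The associated metric is $\tilde g(u,v)=g(u,Sv)+g(Su,v)$; a nonzero vector $w$ is isotropic if $\tilde g(w,w)=0$. Let $p\in M$ and $u\in T_pM$ with $\{u,Su,S^2u,S^3u\}$ a $g$-orthonormal basis of $T_pM$. Coordinates $(x,y,z,t)$ on $T_pM$ are given by $v=xu+ySu+zS^2u+tS^3u$, and coordinates $(x',y',z',t')$ by $x=\frac12(x'-y'+z'-t')$, $y=\frac{\sqrt2}{2}(-y'+t')$, $z=-\frac12(x'+y'+z'+t')$, $t=\frac{\sqrt2}{2}(-x'+z')$. The endpoint of a vector $w\in T_pM$ is the point $w$ of $T_pM$. *)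

theory Defs
  imports "HOL-Analysis.Analysis"
begin

text \<open>The tangent space T_pM is identified with real^4 via the coordinate basis of
the local coordinate system; in that basis the (1,1)-tensor S has the given matrix
(rows (0,1,0,0), (0,0,1,0), (0,0,0,1), (-1,0,0,0)).\<close>

definition S_mat :: "real^4^4" where
  "S_mat = vector [vector [0,1,0,0], vector [0,0,1,0], vector [0,0,0,1], vector [-1,0,0,0]]"

definition S_op :: "real^4 \<Rightarrow> real^4" where
  "S_op v = S_mat *v v"

definition gtilde :: "(real^4 \<Rightarrow> real^4 \<Rightarrow> real) \<Rightarrow> real^4 \<Rightarrow> real^4 \<Rightarrow> real" where
  "gtilde g u v = g u (S_op v) + g (S_op u) v"

definition isotropic :: "(real^4 \<Rightarrow> real^4 \<Rightarrow> real) \<Rightarrow> real^4 \<Rightarrow> bool" where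
  "isotropic g w \<longleftrightarrow> w \<noteq> 0 \<and> gtilde g w w = 0"

end

theory Submission
  imports Defs
begin

text \<open>Since \<open>S\<close> is a \<open>g\<close>-isometry, \<open>g~(S\<^sup>k u, S\<^sup>k u) = 2 g(S\<^sup>k u, S\<^sup>k (S u)) = 2 g(u, S u) = 0\<close>.
By orthonormality the endpoint of \<open>S\<^sup>k u\<close> has coordinates \<open>(x,y,z,t) = e\<^sub>k\<close>, and inverting
the coordinate change gives
\<open>x'\<^sup>2 + y'\<^sup>2 = (x\<^sup>2+y\<^sup>2+z\<^sup>2+t\<^sup>2)/2 - (\<surd>2/2)(t(x-z) - y(x+z))\<close> and
\<open>z'\<^sup>2 + t'\<^sup>2 = (x\<^sup>2+y\<^sup>2+z\<^sup>2+t\<^sup>2)/2 + (\<surd>2/2)(t(x-z) - y(x+z))\<close>,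
whose correction term vanishes at every standard basis vector.\<close>

lemma funpow_preserves_form:
  assumes "\<And>v w. g (f v) (f w) = g v w"
  shows "g ((f ^^ k) v) ((f ^^ k) w) = g v w"
  by (induction k) (simp_all add: assms)

lemma gtilde_self:
  assumes "\<And>v w. g v w = g w v"
  shows "gtilde g w w = 2 * g w (S_op w)"
  unfolding gtilde_def using assms[of "S_op w" w] by simp

lemma isotropic_S_iterate:
  assumes "bilinear g"
    and symmetric: "\<And>v w. g v w = g w v"
    and S_isometry: "\<And>v w. g (S_op v) (S_op w) = g v w"
    and "g u u \<noteq> 0" and "g u (S_op u) = 0"
  shows "isotropic g ((S_op ^^ k) u)"
proof -
  have invariant: "g ((S_op ^^ k) v) ((S_op ^^ k) w) = g v w" for v w
    using S_isometry by (rule funpow_preserves_form)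
  have "g ((S_op ^^ k) u) (S_op ((S_op ^^ k) u)) = g ((S_op ^^ k) u) ((S_op ^^ k) (S_op u))"
    by (simp add: funpow_swap1)
  also have "\<dots> = 0"
    using invariant assms(5) by simp
  finally have "gtilde g ((S_op ^^ k) u) ((S_op ^^ k) u) = 0"
    by (simp add: gtilde_self[OF symmetric])
  moreover have "(S_op ^^ k) u \<noteq> 0"
    using invariant[of u u] assms(4) bilinear_lzero[OF assms(1)] by force
  ultimately show ?thesis
    by (simp add: isotropic_def)
qed

lemma bilinear_orthonormal_coeff:
  assumes "bilinear g" and "finite I" and "j \<in> I"
    and "\<And>i. i \<in> I \<Longrightarrow> g (v i) (v j) = (if i = j then 1 else 0)"
  shows "g (\<Sum>i\<in>I. c i *\<^sub>R v i) (v j) = c j"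
proof -
  interpret linear "\<lambda>x. g x (v j)"
    using assms(1) by (simp add: bilinear_def)
  have "g (\<Sum>i\<in>I. c i *\<^sub>R v i) (v j) = (\<Sum>i\<in>I. c i * g (v i) (v j))"
    by (simp add: sum scale)
  also have "\<dots> = (\<Sum>i\<in>I. if i = j then c i else 0)"
    by (rule sum.cong) (simp_all add: assms(4))
  also have "\<dots> = c j"
    using assms(2,3) by simp
  finally show ?thesis .
qed

lemma orthonormal_coords_standard_basis:
  fixes g :: "'a::real_vector \<Rightarrow> 'a \<Rightarrow> real" and v :: "nat \<Rightarrow> 'a" and x y z t :: real
  assumes "bilinear g"
    and orthonormal: "\<And>i j. i < 4 \<Longrightarrow> j < 4 \<Longrightarrow> g (v i) (v j) = (if i = j then 1 else 0)"
    and "k < 4"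
    and "v k = x *\<^sub>R v 0 + y *\<^sub>R v 1 + z *\<^sub>R v 2 + t *\<^sub>R v 3"
  shows "(x, y, z, t) \<in> {(1, 0, 0, 0), (0, 1, 0, 0), (0, 0, 1, 0), (0, 0, 0, 1)}"
proof -
  have v_k: "v k = (\<Sum>i<4. [x, y, z, t] ! i *\<^sub>R v i)"
    using assms(4) by (simp add: eval_nat_numeral)
  have coeff: "[x, y, z, t] ! j = (if k = j then 1 else 0)" if "j < 4" for j
  proof -
    have "[x, y, z, t] ! j = g (v k) (v j)"
      unfolding v_k
      using bilinear_orthonormal_coeff[OF assms(1) finite_lessThan, where v = v and c = "\<lambda>i. [x, y, z, t] ! i"]
        orthonormal that by simp
    also have "\<dots> = (if k = j then 1 else 0)"
      using orthonormal \<open>k < 4\<close> that by simp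
    finally show ?thesis .
  qed
  have "x = of_bool (k = 0)" "y = of_bool (k = 1)" "z = of_bool (k = 2)" "t = of_bool (k = 3)"
    using coeff[of 0] coeff[of 1] coeff[of 2] coeff[of 3] by auto
  with \<open>k < 4\<close> show ?thesis
    by (auto simp: less_Suc_eq numeral_eq_Suc)
qed

lemma primed_coordinate_sums:
  fixes x y z t x' y' z' t' :: real
  assumes "x = (x' - y' + z' - t') / 2"
    and "y = sqrt 2 / 2 * (- y' + t')"
    and "z = - (x' + y' + z' + t') / 2"
    and "t = sqrt 2 / 2 * (- x' + z')"
  shows "x'\<^sup>2 + y'\<^sup>2 = (x\<^sup>2 + y\<^sup>2 + z\<^sup>2 + t\<^sup>2) / 2 - sqrt 2 / 2 * (t * (x - z) - y * (x + z))"
    and "z'\<^sup>2 + t'\<^sup>2 = (x\<^sup>2 + y\<^sup>2 + z\<^sup>2 + t\<^sup>2) / 2 + sqrt 2 / 2 * (t * (x - z) - y * (x + z))"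
proof -
  have sqrt2: "sqrt 2 * (sqrt 2 * c) = 2 * c" for c :: real
    by (simp add: mult.assoc[symmetric])
  show "x'\<^sup>2 + y'\<^sup>2 = (x\<^sup>2 + y\<^sup>2 + z\<^sup>2 + t\<^sup>2) / 2 - sqrt 2 / 2 * (t * (x - z) - y * (x + z))"
      "z'\<^sup>2 + t'\<^sup>2 = (x\<^sup>2 + y\<^sup>2 + z\<^sup>2 + t\<^sup>2) / 2 + sqrt 2 / 2 * (t * (x - z) - y * (x + z))"
    unfolding assms by (simp_all add: power2_eq_square field_simps sqrt2)
qed

lemma standard_basis_on_surface:
  fixes x y z t x' y' z' t' :: real
  assumes "(x, y, z, t) \<in> {(1, 0, 0, 0), (0, 1, 0, 0), (0, 0, 1, 0), (0, 0, 0, 1)}"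
    and "x = (x' - y' + z' - t') / 2"
    and "y = sqrt 2 / 2 * (- y' + t')"
    and "z = - (x' + y' + z' + t') / 2"
    and "t = sqrt 2 / 2 * (- x' + z')"
  shows "x'\<^sup>2 + y'\<^sup>2 = 1/2" and "z'\<^sup>2 + t'\<^sup>2 = 1/2"
  using primed_coordinate_sums[OF assms(2-5)] assms(1) by auto

theorem theorem3p4:
  fixes g :: "real^4 \<Rightarrow> real^4 \<Rightarrow> real" and u :: "real^4"
  assumes g_bil: "bilinear g"
    and g_sym: "\<And>v w. g v w = g w v"
    and g_pos: "\<And>v. v \<noteq> 0 \<Longrightarrow> g v v > 0"
    and g_S: "\<And>v w. g (S_op v) (S_op w) = g v w"
    and u_on: "\<And>i j. i < 4 \<Longrightarrow> j < 4 \<Longrightarrow>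
                 g ((S_op ^^ i) u) ((S_op ^^ j) u) = (if i = j then 1 else 0)"
  shows "\<forall>k<4. isotropic g ((S_op ^^ k) u) \<and>
           (\<forall>x y z t x' y' z' t' :: real.
              (S_op ^^ k) u = x *\<^sub>R u + y *\<^sub>R S_op u + z *\<^sub>R (S_op ^^ 2) u + t *\<^sub>R (S_op ^^ 3) u
              \<and> x = (x' - y' + z' - t') / 2
              \<and> y = sqrt 2 / 2 * (- y' + t')
              \<and> z = - (x' + y' + z' + t') / 2
              \<and> t = sqrt 2 / 2 * (- x' + z')
              \<longrightarrow> x'\<^sup>2 + y'\<^sup>2 = 1/2 \<and> z'\<^sup>2 + t'\<^sup>2 = 1/2)"
proof (intro allI impI conjI)
  fix k :: nat
  assume k: "k < 4"
  show "isotropic g ((S_op ^^ k) u)"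
    by (rule isotropic_S_iterate[where g = g and u = u, OF g_bil g_sym g_S])
      (use u_on[of 0 0] u_on[of 0 1] in simp_all)
  fix x y z t x' y' z' t' :: real
  assume H: "(S_op ^^ k) u = x *\<^sub>R u + y *\<^sub>R S_op u + z *\<^sub>R (S_op ^^ 2) u + t *\<^sub>R (S_op ^^ 3) u
              \<and> x = (x' - y' + z' - t') / 2
              \<and> y = sqrt 2 / 2 * (- y' + t')
              \<and> z = - (x' + y' + z' + t') / 2
              \<and> t = sqrt 2 / 2 * (- x' + z')"
  then have coords: "x = (x' - y' + z' - t') / 2" "y = sqrt 2 / 2 * (- y' + t')"
      "z = - (x' + y' + z' + t') / 2" "t = sqrt 2 / 2 * (- x' + z')"
    by blast+
  from H have expand: "(S_op ^^ k) u = x *\<^sub>R (S_op ^^ 0) u + y *\<^sub>R (S_op ^^ 1) u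
      + z *\<^sub>R (S_op ^^ 2) u + t *\<^sub>R (S_op ^^ 3) u"
    by simp
  have "(x, y, z, t) \<in> {(1, 0, 0, 0), (0, 1, 0, 0), (0, 0, 1, 0), (0, 0, 0, 1)}"
    by (rule orthonormal_coords_standard_basis[where v = "\<lambda>i. (S_op ^^ i) u", OF g_bil _ k expand])
      (simp add: u_on)
  then show "x'\<^sup>2 + y'\<^sup>2 = 1/2" "z'\<^sup>2 + t'\<^sup>2 = 1/2"
    by (rule standard_basis_on_surface[OF _ coords])+
qed

end
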